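(* Let $\Sigma,\Gamma$ be finite alphabets, $k>0$, $\tau$ a tier on $\Sigma\times\Gamma^*$, and $f:\Sigma^*\to\Gamma^*$ a function that is $k$-TSSL on tier $\tau$. Then the SFST $T_f$ constructed from $f$ as described in the context is onward.
   Context: Strings: $\lambda$ is the empty string; $\rtimes$ is a boundary symbol not in any alphabet. For $m\ge0$, $\mathrm{suff}^m(x)$ is the string of the last $m$ symbols of $\rtimes^mx$. $\mathrm{lcp}(A)$ is the longest common prefix of a set of strings $A$. SFST: $\langle Q,\Sigma,\Gamma,q_0,\to,\sigma\rangle$ with states $Q$, start $q_0$, transition function $\to:Q\times\Sigma\to Q\times\Gamma^*$, final output $\sigma:Q\to\Gamma^*$; $q\xrightarrow{a:y}r$ means $\to(q,a)=\langle r,y\rangle$. The SFST is onward if for every state $q\ne q_0$, $\mathrm{lcp}(\{y\mid\exists a\in\Sigma\,\exists r.\ q\xrightarrow{a:y}r\}\cup\{\sigma(q)\})=\lambda$. For $f:\Sigma^*\to\Gamma^*$: $f^{\gets}(x):=\mathrm{lcp}(\{f(xy)\mid y\in\Sigma^*\})$; $f^{\to}_x$ is defined by $f(xy)=f^{\gets}(x)f^{\to}_x(y)$. A tier on a (possibly infinite) alphabet $A$ is a homomorphism $\tau:A^*\to A^*$ with $\tau(a)\in\{a,\lambda\}$ for each $a$; extended to $\rtimes$ by $\tau(\rtimes)=\rtimes$. Actions: $\mathbb{A}_f:=\{\langle x,y\rangle\in\Sigma\times\Gamma^*\mid\exists z.\ f^{\gets}(zx)=f^{\gets}(z)y\}$,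 written $x:y$. Run: if $|x|\le1$, $f^{\Leftarrow}(x):=x:f^{\gets}(x)$; if $x=yz$, $|y|\ge1$, $|z|=1$, $f^{\Leftarrow}(x):=f^{\Leftarrow}(y)(z:w)$ where $f^{\gets}(x)=f^{\gets}(y)w$. $f$ is $k$-TSSL on $\tau$ if $\mathrm{suff}^{k-1}(\tau(f^{\Leftarrow}(x)))=\mathrm{suff}^{k-1}(\tau(f^{\Leftarrow}(y)))$ implies $f^{\to}_x=f^{\to}_y$ for all $x,y\in\Sigma^*$. Construction of $T_f$: $Q:=(\{\rtimes\}\cup\mathbb{A}_f)^{k-1}$, $q_0:=\rtimes^{k-1}$. For $x\in\Sigma$, $\to(q_0,x):=\langle \mathrm{suff}^{k-1}(\tau(x:f^{\gets}(x))),f^{\gets}(x)\rangle$. For $q\in Q\setminus\{q_0\}$ and $w\in\Sigma$: take $x\in\Sigma^*$ with $\mathrm{suff}^{k-1}(\tau(f^{\Leftarrow}(x)))=q$ and let $w:y\in\mathbb{A}_f$ be such that $f^{\gets}(xw)=f^{\gets}(x)y$; set $\to(q,w):=\langle\mathrm{suff}^{k-1}(\tau(q(w:y))),y\rangle$ (by the TSSL property this does not depend on the choice of $x$). Final outputs: $\sigma(q_0):=f(\lambda)$, and for $q\ne q_0$, $\sigma(q):=f^{\to}_x(\lambda)$ where $\mathrm{suff}^{k-1}(\tau(f^{\Leftarrow}(x)))=q$. *)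

theory Defs
  imports Main "HOL-Library.Sublist"
begin

text \<open>Strings over an alphabet are lists. The boundary symbol is modelled by None,
  ordinary symbols (actions) by Some. lcp is the library Longest_common_prefix.\<close>

abbreviation lcp :: "'a list set \<Rightarrow> 'a list" where
  "lcp A \<equiv> Longest_common_prefix A"

definition suff :: "nat \<Rightarrow> 'c option list \<Rightarrow> 'c option list" where
  "suff m xs = drop (length xs) (replicate m None @ xs)"

definition f_lar :: "('a list \<Rightarrow> 'b list) \<Rightarrow> 'a list \<Rightarrow> 'b list" where
  "f_lar f x = lcp {f (x @ y) | y. True}"

text \<open>f-right_x, determined by f(xy) = f_lar(x) f_to_x(y)\<close>
definition f_to :: "('a list \<Rightarrow> 'b list) \<Rightarrow> 'a list \<Rightarrow> 'a list \<Rightarrow> 'b list" where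
  "f_to f x y = drop (length (f_lar f x)) (f (x @ y))"

definition actions :: "('a list \<Rightarrow> 'b list) \<Rightarrow> ('a \<times> 'b list) set" where
  "actions f = {(a, y). \<exists>z. f_lar f (z @ [a]) = f_lar f z @ y}"

function run :: "('a list \<Rightarrow> 'b list) \<Rightarrow> 'a list \<Rightarrow> ('a \<times> 'b list) list" where
  "run f x = (if length x \<le> 1 then map (\<lambda>a. (a, f_lar f x)) x
     else run f (butlast x) @
          [(last x, drop (length (f_lar f (butlast x))) (f_lar f x))])"
  by auto
termination by (relation "measure (\<lambda>(f, x). length x)") auto

text \<open>A tier on the alphabet of actions is given by the predicate of kept symbols;
  it is extended to the boundary symbol (None), which is always kept.\<close>
definition tier :: "('c \<Rightarrow> bool) \<Rightarrow> 'c list \<Rightarrow> 'c list" where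
  "tier T xs = filter T xs"

definition tier_b :: "('c \<Rightarrow> bool) \<Rightarrow> 'c option list \<Rightarrow> 'c option list" where
  "tier_b T xs = filter (\<lambda>c. case c of None \<Rightarrow> True | Some a \<Rightarrow> T a) xs"

definition tstate :: "nat \<Rightarrow> (('a \<times> 'b list) \<Rightarrow> bool) \<Rightarrow> ('a list \<Rightarrow> 'b list)
    \<Rightarrow> 'a list \<Rightarrow> ('a \<times> 'b list) option list" where
  "tstate k T f x = suff (k - 1) (map Some (tier T (run f x)))"

definition TSSL :: "nat \<Rightarrow> (('a \<times> 'b list) \<Rightarrow> bool) \<Rightarrow> ('a list \<Rightarrow> 'b list) \<Rightarrow> bool" where
  "TSSL k T f \<longleftrightarrow> (\<forall>x y. tstate k T f x = tstate k T f y \<longrightarrow> f_to f x = f_to f y)"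

record ('q, 'a, 'b) sfst =
  states :: "'q set"
  start :: 'q
  trans :: "'q \<Rightarrow> 'a \<Rightarrow> 'q \<times> 'b list"
  final :: "'q \<Rightarrow> 'b list"

definition onward :: "('q, 'a, 'b) sfst \<Rightarrow> bool" where
  "onward M \<longleftrightarrow> (\<forall>q \<in> states M. q \<noteq> start M \<longrightarrow>
     lcp ({snd (trans M q a) | a. True} \<union> {final M q}) = [])"

text \<open>M is (a choice of) the transducer T_f built from f as in the construction.
  Whenever the construction says "take x with ...", the witness may be chosen
  arbitrarily (separately for each transition and each final output).\<close>
definition is_Tf :: "nat \<Rightarrow> (('a \<times> 'b list) \<Rightarrow> bool) \<Rightarrow> ('a list \<Rightarrow> 'b list)
    \<Rightarrow> (('a \<times> 'b list) option list, 'a, 'b) sfst \<Rightarrow> bool" where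
  "is_Tf k T f M \<longleftrightarrow>
     states M = {replicate (k - 1) None} \<union> {tstate k T f x | x. True} \<and>
     start M = replicate (k - 1) None \<and>
     (\<forall>a. trans M (start M) a =
        (suff (k - 1) (tier_b T [Some (a, f_lar f [a])]), f_lar f [a])) \<and>
     final M (start M) = f [] \<and>
     (\<forall>q \<in> states M. q \<noteq> start M \<longrightarrow>
        (\<forall>w. \<exists>x y. tstate k T f x = q \<and> (w, y) \<in> actions f \<and>
              f_lar f (x @ [w]) = f_lar f x @ y \<and>
              trans M q w = (suff (k - 1) (tier_b T (q @ [Some (w, y)])), y)) \<and>
        (\<exists>x. tstate k T f x = q \<and> final M q = f_to f x []))"

end

theory Submission
  imports Defs
begin

text \<open>Every residual f_to f x has empty lcp over all its values, since whatever the f (x @ y)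
  have in common already lies in f_lar f x. By the TSSL property a state q of T_f determines one
  such residual: its final output is the value at the empty word and its w-transition outputs the
  lcp of the values on words starting with w. Sorting words by their first letter, the lcp of all
  these outputs is the lcp of all values of the residual, which is empty.\<close>

lemma Longest_common_prefix_image_append:
  "L \<noteq> {} \<Longrightarrow> lcp ((@) p ` L) = p @ lcp L"
proof (induction p)
  case Nil
  then show ?case by simp
next
  case (Cons a p)
  have "(@) (a # p) ` L = (#) a ` ((@) p ` L)" by auto
  then show ?case
    using Cons Longest_common_prefix_image_Cons[of "(@) p ` L" a] by simp
qed

lemma Longest_common_prefix_by_first_letter:
  "lcp (insert (g []) (range (\<lambda>w. lcp (range (\<lambda>y. g (w # y)))))) = lcp (range g)"
  (is "lcp ?S = _")
proof (rule prefix_order.antisym)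
  show "prefix (lcp ?S) (lcp (range g))"
  proof (rule Longest_common_prefix_max_prefix, simp, intro ballI)
    fix s assume "s \<in> range g"
    then obtain y where s: "s = g y" by blast
    show "prefix (lcp ?S) s"
    proof (cases y)
      case Nil
      then show ?thesis using s by (simp add: Longest_common_prefix_prefix)
    next
      case (Cons w y')
      have "prefix (lcp ?S) (lcp (range (\<lambda>y. g (w # y))))"
        by (rule Longest_common_prefix_prefix) blast
      moreover have "prefix (lcp (range (\<lambda>y. g (w # y)))) (g (w # y'))"
        by (rule Longest_common_prefix_prefix) blast
      ultimately show ?thesis
        using s Cons by (auto intro: prefix_order.trans)
    qed
  qed
  show "prefix (lcp (range g)) (lcp ?S)"
    by (rule Longest_common_prefix_max_prefix)
      (auto intro: Longest_common_prefix_prefix Longest_common_prefix_max_prefix)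
qed

lemma prefix_f_lar: "prefix (f_lar f x) (f (x @ y))"
  unfolding f_lar_def by (rule Longest_common_prefix_prefix) auto

lemma f_lar_append_f_to: "f (x @ y) = f_lar f x @ f_to f x y"
  using prefix_f_lar[of f x y] unfolding f_to_def prefix_def by auto

lemma f_lar_append: "f_lar f (x @ u) = f_lar f x @ lcp (range (\<lambda>y. f_to f x (u @ y)))"
proof -
  have "{f ((x @ u) @ y) | y. True} = (@) (f_lar f x) ` range (\<lambda>y. f_to f x (u @ y))"
    by (auto simp: f_lar_append_f_to[of f x "u @ _"])
  then show ?thesis
    unfolding f_lar_def[of f "x @ u"]
    by (simp add: Longest_common_prefix_image_append f_lar_def)
qed

lemma Longest_common_prefix_f_to: "lcp (range (f_to f x)) = []"
  using f_lar_append[of f x "[]"] by simp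

lemma f_lar_snoc: "f_lar f (x @ [w]) = f_lar f x @ lcp (range (\<lambda>y. f_to f x (w # y)))"
  using f_lar_append[of f x "[w]"] by simp

lemma is_Tf_outputs:
  assumes "TSSL k T f" "is_Tf k T f M" "q \<in> states M" "q \<noteq> start M"
  obtains x where "final M q = f_to f x []"
    and "\<And>w. snd (trans M q w) = lcp (range (\<lambda>y. f_to f x (w # y)))"
proof -
  have trans_q: "\<forall>w. \<exists>x y. tstate k T f x = q \<and> (w, y) \<in> actions f \<and>
        f_lar f (x @ [w]) = f_lar f x @ y \<and>
        trans M q w = (suff (k - 1) (tier_b T (q @ [Some (w, y)])), y)"
    and "\<exists>x. tstate k T f x = q \<and> final M q = f_to f x []"
    using assms(2-4) unfolding is_Tf_def by auto
  then obtain x where x: "tstate k T f x = q" "final M q = f_to f x []" by blast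
  have "snd (trans M q w) = lcp (range (\<lambda>y. f_to f x (w # y)))" for w
  proof -
    obtain x' y where x': "tstate k T f x' = q" "f_lar f (x' @ [w]) = f_lar f x' @ y"
        "snd (trans M q w) = y"
      using trans_q by fastforce
    have "f_to f x' = f_to f x"
      using assms(1) x'(1) x(1) unfolding TSSL_def by metis
    with x' show ?thesis by (simp add: f_lar_snoc)
  qed
  with x(2) show thesis by (rule that)
qed

theorem corollary28:
  fixes f :: "'a::finite list \<Rightarrow> 'b::finite list"
    and T :: "('a \<times> 'b list) \<Rightarrow> bool"
    and k :: nat
    and M :: "(('a \<times> 'b list) option list, 'a, 'b) sfst"
  assumes "k > 0"
    and "TSSL k T f"
    and "is_Tf k T f M"
  shows "onward M"
  unfolding onward_def
proof (intro ballI impI)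
  fix q assume q: "q \<in> states M" "q \<noteq> start M"
  obtain x where final: "final M q = f_to f x []"
    and trans: "\<And>w. snd (trans M q w) = lcp (range (\<lambda>y. f_to f x (w # y)))"
    using is_Tf_outputs[OF assms(2,3) q] by blast
  have "{snd (trans M q a) | a. True} \<union> {final M q}
      = insert (f_to f x []) (range (\<lambda>w. lcp (range (\<lambda>y. f_to f x (w # y)))))"
    by (auto simp: final trans)
  then show "lcp ({snd (trans M q a) | a. True} \<union> {final M q}) = []"
    by (simp add: Longest_common_prefix_by_first_letter Longest_common_prefix_f_to)
qed

end
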